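(* Let $(\mathcal{F},\nu):(\mathcal{K},c)\to\mathcal{K}'$ be a bilax functor and $b:A\to A$ a $c$-bimonad in $\mathcal{K}$ with structure $(\mu,\eta,\Delta,\varepsilon)$. Equip $\mathcal{F}(b)$ with the monad structure $\mu^{\mathcal{F}}=\mathcal{F}(\mu)\cdot\mathcal{F}^2_{b,b}$, $\eta^{\mathcal{F}}=\mathcal{F}(\eta)\cdot\mathcal{F}^0_A$ and comonad structure $\Delta^{\mathcal{F}}=\mathcal{F}_{2;b,b}\cdot\mathcal{F}(\Delta)$, $\varepsilon^{\mathcal{F}}=\mathcal{F}_{0;A}\cdot\mathcal{F}(\varepsilon)$. Then $\mathcal{F}(b)$ is a $\nu$-bimonad in $\mathcal{K}'$: it satisfies $(\mu^{\mathcal{F}}\circ\mu^{\mathcal{F}})\cdot(1\circ\nu_{b,b}\circ1)\cdot(\Delta^{\mathcal{F}}\circ\Delta^{\mathcal{F}})=\Delta^{\mathcal{F}}\cdot\mu^{\mathcal{F}}$, $\varepsilon^{\mathcal{F}}\circ\varepsilon^{\mathcal{F}}=\varepsilon^{\mathcal{F}}\cdot\mu^{\mathcal{F}}$, $\eta^{\mathcal{F}}\circ\eta^{\mathcal{F}}=\Delta^{\mathcal{F}}\cdot\eta^{\mathcal{F}}$ and $\varepsilon^{\mathcal{F}}\cdot\eta^{\mathcal{F}}=1$. Moreover, $\nu_{b,b}$ is a distributive law on both the left and the right with respect to both the monad and the comonad structure of $\mathcal{F}(b)$ (so $\mathcal{F}(b)$ is a $\tau$-bimonad with $\tau=\nu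_{b,b}$).
   Context: Conventions: in a 2-category, $\circ$ is horizontal composition, $\cdot$ vertical composition ($\beta\cdot\alpha$: first $\alpha$), $1$ identity 2-cells; a 1-endocell is a 1-cell $A\to A$. A Yang–Baxter operator $c$ of $\mathcal{K}$: 2-cells $c_{g,f}:g\circ f\Rightarrow f\circ g$ for 1-endocells of a common object, natural, satisfying the Yang–Baxter equation $(c_{g,f}\circ1)\cdot(1\circ c_{h,f})\cdot(c_{h,g}\circ1)=(1\circ c_{h,g})\cdot(c_{h,f}\circ1)\cdot(1\circ c_{g,f})$ and $c_{\mathrm{id},f}=c_{f,\mathrm{id}}=1$. A $c$-bimonad is a 1-endocell $b$ with monad $(\mu,\eta)$ and comonad $(\Delta,\varepsilon)$ such that $\tau=c_{b,b}$ satisfies $\tau\cdot(\mu\circ1)=(1\circ\mu)\cdot(\tau\circ1)\cdot(1\circ\tau)$, $\tau\cdot(\eta\circ1)=1\circ\eta$, $\tau\cdot(1\circ\mu)=(\mu\circ1)\cdot(1\circ\tau)\cdot(\tau\circ1)$, $\tau\cdot(1\circ\eta)=\eta\circ1$, $(\Delta\circ1)\cdot\tau=(1\circ\tau)\cdot(\tau\circ1)\cdot(1\circ\Delta)$, $(\varepsilon\circ1)\cdot\tau=1\circ\varepsilon$, $(1\circ\Delta)\cdot\tau=(\tau\circ1)\cdot(1\circ\tau)\cdot(\Delta\circ1)$, $(1\circ\varepsilon)\cdot\tau=\varepsilon\circ1$ (these eight say $\tau$ is a left and right distributive law for the monad and for the comonad), and $(\mu\circ\mu)\cdot(1\circ\tau\circ1)\cdot(\Delta\circ\Delta)=\Delta\cdot\mu$,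 $\varepsilon\circ\varepsilon=\varepsilon\cdot\mu$, $\eta\circ\eta=\Delta\cdot\eta$, $\varepsilon\cdot\eta=1$. A bilax functor $(\mathcal{F},\nu):(\mathcal{K},c)\to\mathcal{K}'$ is a functor with lax structure $\mathcal{F}^2_{g,f}:\mathcal{F}(g)\circ\mathcal{F}(f)\Rightarrow\mathcal{F}(gf)$, $\mathcal{F}^0_A:\mathrm{id}\Rightarrow\mathcal{F}(\mathrm{id}_A)$, colax structure $\mathcal{F}_{2;g,f}:\mathcal{F}(gf)\Rightarrow\mathcal{F}(g)\circ\mathcal{F}(f)$, $\mathcal{F}_{0;A}:\mathcal{F}(\mathrm{id}_A)\Rightarrow\mathrm{id}$, and natural 2-cells $\nu_{g,f}:\mathcal{F}(g)\circ\mathcal{F}(f)\Rightarrow\mathcal{F}(f)\circ\mathcal{F}(g)$ for 1-endocells $f,g$ of a common object satisfying: the Yang–Baxter equation; $(1\circ\mathcal{F}_0)\cdot\nu_{\mathrm{id},f}\cdot(\mathcal{F}^0\circ1)=1=(\mathcal{F}_0\circ1)\cdot\nu_{f,\mathrm{id}}\cdot(1\circ\mathcal{F}^0)$; $\nu_{hg,f}\cdot(\mathcal{F}^2_{h,g}\circ1)=(1\circ\mathcal{F}^2_{h,g})\cdot(\nu_{h,f}\circ1)\cdot(1\circ\nu_{g,f})$; $\nu_{\mathrm{id},f}\cdot(\mathcal{F}^0\circ1)=1\circ\mathcal{F}^0$; $\nu_{h,gf}\cdot(1\circ\mathcal{F}^2_{g,f})=(\mathcal{F}^2_{g,f}\circ1)\cdot(1\circ\nu_{h,f})\cdot(\nu_{h,g}\circ1)$;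 $\nu_{f,\mathrm{id}}\cdot(1\circ\mathcal{F}^0)=\mathcal{F}^0\circ1$; $(\mathcal{F}_{2;h,g}\circ1)\cdot\nu_{f,hg}=(1\circ\nu_{f,g})\cdot(\nu_{f,h}\circ1)\cdot(1\circ\mathcal{F}_{2;h,g})$; $(\mathcal{F}_0\circ1)\cdot\nu_{f,\mathrm{id}}=1\circ\mathcal{F}_0$; $(1\circ\mathcal{F}_{2;g,f})\cdot\nu_{gf,h}=(\nu_{g,h}\circ1)\cdot(1\circ\nu_{f,h})\cdot(\mathcal{F}_{2;g,f}\circ1)$; $(1\circ\mathcal{F}_0)\cdot\nu_{\mathrm{id},f}=\mathcal{F}_0\circ1$; and for $A\xrightarrow{k}B\xrightarrow{h}B\xrightarrow{f}B\xrightarrow{g}C$: $(\mathcal{F}^2_{g,h}\circ\mathcal{F}^2_{f,k})\cdot(1\circ\nu_{f,h}\circ1)\cdot(\mathcal{F}_{2;g,f}\circ\mathcal{F}_{2;h,k})=\mathcal{F}_{2;gh,fk}\cdot\mathcal{F}(1_g\circ c_{f,h}\circ1_k)\cdot\mathcal{F}^2_{gf,hk}$, $\mathcal{F}^0\circ\mathcal{F}^0=\mathcal{F}_{2;\mathrm{id},\mathrm{id}}\cdot\mathcal{F}^0$, $\mathcal{F}_0\circ\mathcal{F}_0=\mathcal{F}_0\cdot\mathcal{F}^2_{\mathrm{id},\mathrm{id}}$, $\mathcal{F}_0\cdot\mathcal{F}^0=1$. *)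

theory Defs
  imports Main
begin

section \<open>Strict 2-categories, presented as records\<close>

text \<open>Objects of type 'o, 1-cells of type 'a, 2-cells of type 'c.
  comp K g f is the composite g o f of f : A -> B and g : B -> C.
  vcomp K beta alpha is beta . alpha (first alpha).
  hcomp K beta alpha is beta o alpha, for alpha : f => f', beta : g => g' with g o f defined.\<close>

record ('o, 'a, 'c) twocat =
  ob    :: "'o set"
  hom   :: "'a set"
  src   :: "'a \<Rightarrow> 'o"
  trg   :: "'a \<Rightarrow> 'o"
  idc   :: "'o \<Rightarrow> 'a"
  comp  :: "'a \<Rightarrow> 'a \<Rightarrow> 'a"
  cell  :: "'c set"
  dom2  :: "'c \<Rightarrow> 'a"
  cod2  :: "'c \<Rightarrow> 'a"
  id2   :: "'a \<Rightarrow> 'c"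
  vcomp :: "'c \<Rightarrow> 'c \<Rightarrow> 'c"
  hcomp :: "'c \<Rightarrow> 'c \<Rightarrow> 'c"

definition cell_in :: "('o,'a,'c) twocat \<Rightarrow> 'c \<Rightarrow> 'a \<Rightarrow> 'a \<Rightarrow> bool" where
  "cell_in K \<alpha> f g \<longleftrightarrow> \<alpha> \<in> cell K \<and> dom2 K \<alpha> = f \<and> cod2 K \<alpha> = g"

definition endo :: "('o,'a,'c) twocat \<Rightarrow> 'o \<Rightarrow> 'a \<Rightarrow> bool" where
  "endo K A f \<longleftrightarrow> f \<in> hom K \<and> src K f = A \<and> trg K f = A"

definition strict_2cat :: "('o,'a,'c) twocat \<Rightarrow> bool" where
  "strict_2cat K \<longleftrightarrow>
    (\<forall>f\<in>hom K. src K f \<in> ob K \<and> trg K f \<in> ob K) \<and>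
    (\<forall>A\<in>ob K. idc K A \<in> hom K \<and> src K (idc K A) = A \<and> trg K (idc K A) = A) \<and>
    (\<forall>f\<in>hom K. \<forall>g\<in>hom K. trg K f = src K g \<longrightarrow>
        comp K g f \<in> hom K \<and> src K (comp K g f) = src K f \<and> trg K (comp K g f) = trg K g) \<and>
    (\<forall>f\<in>hom K. comp K (idc K (trg K f)) f = f \<and> comp K f (idc K (src K f)) = f) \<and>
    (\<forall>f\<in>hom K. \<forall>g\<in>hom K. \<forall>h\<in>hom K. trg K f = src K g \<and> trg K g = src K h \<longrightarrow>
        comp K h (comp K g f) = comp K (comp K h g) f) \<and>
    (\<forall>\<alpha>\<in>cell K. dom2 K \<alpha> \<in> hom K \<and> cod2 K \<alpha> \<in> hom K \<and>
        src K (dom2 K \<alpha>) = src K (cod2 K \<alpha>) \<and> trg K (dom2 K \<alpha>) = trg K (cod2 K \<alpha>)) \<and>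
    (\<forall>f\<in>hom K. cell_in K (id2 K f) f f) \<and>
    (\<forall>\<alpha>\<in>cell K. \<forall>\<beta>\<in>cell K. cod2 K \<alpha> = dom2 K \<beta> \<longrightarrow>
        cell_in K (vcomp K \<beta> \<alpha>) (dom2 K \<alpha>) (cod2 K \<beta>)) \<and>
    (\<forall>\<alpha>\<in>cell K. vcomp K \<alpha> (id2 K (dom2 K \<alpha>)) = \<alpha> \<and> vcomp K (id2 K (cod2 K \<alpha>)) \<alpha> = \<alpha>) \<and>
    (\<forall>\<alpha>\<in>cell K. \<forall>\<beta>\<in>cell K. \<forall>\<gamma>\<in>cell K. cod2 K \<alpha> = dom2 K \<beta> \<and> cod2 K \<beta> = dom2 K \<gamma> \<longrightarrow>
        vcomp K \<gamma> (vcomp K \<beta> \<alpha>) = vcomp K (vcomp K \<gamma> \<beta>) \<alpha>) \<and>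
    (\<forall>\<alpha>\<in>cell K. \<forall>\<beta>\<in>cell K. trg K (dom2 K \<alpha>) = src K (dom2 K \<beta>) \<longrightarrow>
        cell_in K (hcomp K \<beta> \<alpha>) (comp K (dom2 K \<beta>) (dom2 K \<alpha>)) (comp K (cod2 K \<beta>) (cod2 K \<alpha>))) \<and>
    (\<forall>\<alpha>\<in>cell K. hcomp K (id2 K (idc K (trg K (dom2 K \<alpha>)))) \<alpha> = \<alpha> \<and>
        hcomp K \<alpha> (id2 K (idc K (src K (dom2 K \<alpha>)))) = \<alpha>) \<and>
    (\<forall>\<alpha>\<in>cell K. \<forall>\<beta>\<in>cell K. \<forall>\<gamma>\<in>cell K.
        trg K (dom2 K \<alpha>) = src K (dom2 K \<beta>) \<and> trg K (dom2 K \<beta>) = src K (dom2 K \<gamma>) \<longrightarrow>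
        hcomp K \<gamma> (hcomp K \<beta> \<alpha>) = hcomp K (hcomp K \<gamma> \<beta>) \<alpha>) \<and>
    (\<forall>f\<in>hom K. \<forall>g\<in>hom K. trg K f = src K g \<longrightarrow>
        hcomp K (id2 K g) (id2 K f) = id2 K (comp K g f)) \<and>
    (\<forall>\<alpha>\<in>cell K. \<forall>\<alpha>'\<in>cell K. \<forall>\<beta>\<in>cell K. \<forall>\<beta>'\<in>cell K.
        cod2 K \<alpha> = dom2 K \<alpha>' \<and> cod2 K \<beta> = dom2 K \<beta>' \<and> trg K (dom2 K \<alpha>) = src K (dom2 K \<beta>) \<longrightarrow>
        hcomp K (vcomp K \<beta>' \<beta>) (vcomp K \<alpha>' \<alpha>) = vcomp K (hcomp K \<beta>' \<alpha>') (hcomp K \<beta> \<alpha>))"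

definition yb_operator :: "('o,'a,'c) twocat \<Rightarrow> ('a \<Rightarrow> 'a \<Rightarrow> 'c) \<Rightarrow> bool" where
  "yb_operator K c \<longleftrightarrow>
    (\<forall>A\<in>ob K. \<forall>f g. endo K A f \<and> endo K A g \<longrightarrow>
        cell_in K (c g f) (comp K g f) (comp K f g)) \<and>
    (\<forall>A\<in>ob K. \<forall>\<alpha>\<in>cell K. \<forall>\<beta>\<in>cell K. endo K A (dom2 K \<alpha>) \<and> endo K A (dom2 K \<beta>) \<longrightarrow>
        vcomp K (c (cod2 K \<beta>) (cod2 K \<alpha>)) (hcomp K \<beta> \<alpha>)
          = vcomp K (hcomp K \<alpha> \<beta>) (c (dom2 K \<beta>) (dom2 K \<alpha>))) \<and>
    (\<forall>A\<in>ob K. \<forall>f g h. endo K A f \<and> endo K A g \<and> endo K A h \<longrightarrow>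
        vcomp K (hcomp K (c g f) (id2 K h))
          (vcomp K (hcomp K (id2 K g) (c h f)) (hcomp K (c h g) (id2 K f)))
        = vcomp K (hcomp K (id2 K f) (c h g))
          (vcomp K (hcomp K (c h f) (id2 K g)) (hcomp K (id2 K h) (c g f)))) \<and>
    (\<forall>A\<in>ob K. \<forall>f. endo K A f \<longrightarrow> c (idc K A) f = id2 K f \<and> c f (idc K A) = id2 K f)"

definition monad2 :: "('o,'a,'c) twocat \<Rightarrow> 'o \<Rightarrow> 'a \<Rightarrow> 'c \<Rightarrow> 'c \<Rightarrow> bool" where
  "monad2 K A b \<mu> \<eta> \<longleftrightarrow> endo K A b \<and>
    cell_in K \<mu> (comp K b b) b \<and> cell_in K \<eta> (idc K A) b \<and>
    vcomp K \<mu> (hcomp K \<mu> (id2 K b)) = vcomp K \<mu> (hcomp K (id2 K b) \<mu>) \<and>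
    vcomp K \<mu> (hcomp K \<eta> (id2 K b)) = id2 K b \<and>
    vcomp K \<mu> (hcomp K (id2 K b) \<eta>) = id2 K b"

definition comonad2 :: "('o,'a,'c) twocat \<Rightarrow> 'o \<Rightarrow> 'a \<Rightarrow> 'c \<Rightarrow> 'c \<Rightarrow> bool" where
  "comonad2 K A b \<Delta> \<epsilon> \<longleftrightarrow> endo K A b \<and>
    cell_in K \<Delta> b (comp K b b) \<and> cell_in K \<epsilon> b (idc K A) \<and>
    vcomp K (hcomp K \<Delta> (id2 K b)) \<Delta> = vcomp K (hcomp K (id2 K b) \<Delta>) \<Delta> \<and>
    vcomp K (hcomp K \<epsilon> (id2 K b)) \<Delta> = id2 K b \<and>
    vcomp K (hcomp K (id2 K b) \<epsilon>) \<Delta> = id2 K b"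

definition tau_bimonad :: "('o,'a,'c) twocat \<Rightarrow> 'o \<Rightarrow> 'a \<Rightarrow> 'c \<Rightarrow> 'c \<Rightarrow> 'c \<Rightarrow> 'c \<Rightarrow> 'c \<Rightarrow> bool" where
  "tau_bimonad K A b \<mu> \<eta> \<Delta> \<epsilon> \<tau> \<longleftrightarrow>
    monad2 K A b \<mu> \<eta> \<and> comonad2 K A b \<Delta> \<epsilon> \<and>
    cell_in K \<tau> (comp K b b) (comp K b b) \<and>
    vcomp K \<tau> (hcomp K \<mu> (id2 K b))
      = vcomp K (hcomp K (id2 K b) \<mu>) (vcomp K (hcomp K \<tau> (id2 K b)) (hcomp K (id2 K b) \<tau>)) \<and>
    vcomp K \<tau> (hcomp K \<eta> (id2 K b)) = hcomp K (id2 K b) \<eta> \<and>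
    vcomp K \<tau> (hcomp K (id2 K b) \<mu>)
      = vcomp K (hcomp K \<mu> (id2 K b)) (vcomp K (hcomp K (id2 K b) \<tau>) (hcomp K \<tau> (id2 K b))) \<and>
    vcomp K \<tau> (hcomp K (id2 K b) \<eta>) = hcomp K \<eta> (id2 K b) \<and>
    vcomp K (hcomp K \<Delta> (id2 K b)) \<tau>
      = vcomp K (hcomp K (id2 K b) \<tau>) (vcomp K (hcomp K \<tau> (id2 K b)) (hcomp K (id2 K b) \<Delta>)) \<and>
    vcomp K (hcomp K \<epsilon> (id2 K b)) \<tau> = hcomp K (id2 K b) \<epsilon> \<and>
    vcomp K (hcomp K (id2 K b) \<Delta>) \<tau>
      = vcomp K (hcomp K \<tau> (id2 K b)) (vcomp K (hcomp K (id2 K b) \<tau>) (hcomp K \<Delta> (id2 K b))) \<and>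
    vcomp K (hcomp K (id2 K b) \<epsilon>) \<tau> = hcomp K \<epsilon> (id2 K b) \<and>
    vcomp K (hcomp K \<mu> \<mu>) (vcomp K (hcomp K (id2 K b) (hcomp K \<tau> (id2 K b))) (hcomp K \<Delta> \<Delta>))
      = vcomp K \<Delta> \<mu> \<and>
    hcomp K \<epsilon> \<epsilon> = vcomp K \<epsilon> \<mu> \<and>
    hcomp K \<eta> \<eta> = vcomp K \<Delta> \<eta> \<and>
    vcomp K \<epsilon> \<eta> = id2 K (idc K A)"

definition c_bimonad :: "('o,'a,'c) twocat \<Rightarrow> ('a \<Rightarrow> 'a \<Rightarrow> 'c) \<Rightarrow> 'o \<Rightarrow> 'a \<Rightarrow> 'c \<Rightarrow> 'c \<Rightarrow> 'c \<Rightarrow> 'c \<Rightarrow> bool" where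
  "c_bimonad K c A b \<mu> \<eta> \<Delta> \<epsilon> \<longleftrightarrow> tau_bimonad K A b \<mu> \<eta> \<Delta> \<epsilon> (c b b)"

definition functor_data :: "('o,'a,'c) twocat \<Rightarrow> ('p,'b,'d) twocat \<Rightarrow>
    ('o \<Rightarrow> 'p) \<Rightarrow> ('a \<Rightarrow> 'b) \<Rightarrow> ('c \<Rightarrow> 'd) \<Rightarrow> bool" where
  "functor_data K K' F0 F1 F2 \<longleftrightarrow>
    (\<forall>A\<in>ob K. F0 A \<in> ob K') \<and>
    (\<forall>f\<in>hom K. F1 f \<in> hom K' \<and> src K' (F1 f) = F0 (src K f) \<and> trg K' (F1 f) = F0 (trg K f)) \<and>
    (\<forall>\<alpha>\<in>cell K. cell_in K' (F2 \<alpha>) (F1 (dom2 K \<alpha>)) (F1 (cod2 K \<alpha>))) \<and>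
    (\<forall>f\<in>hom K. F2 (id2 K f) = id2 K' (F1 f)) \<and>
    (\<forall>\<alpha>\<in>cell K. \<forall>\<beta>\<in>cell K. cod2 K \<alpha> = dom2 K \<beta> \<longrightarrow>
        F2 (vcomp K \<beta> \<alpha>) = vcomp K' (F2 \<beta>) (F2 \<alpha>))"

text \<open>Lax structure: L2 g f = F^2_{g,f} : F g o F f => F (g f), L0 A = F^0_A : id => F(id_A).\<close>
definition lax_structure :: "('o,'a,'c) twocat \<Rightarrow> ('p,'b,'d) twocat \<Rightarrow>
    ('o \<Rightarrow> 'p) \<Rightarrow> ('a \<Rightarrow> 'b) \<Rightarrow> ('c \<Rightarrow> 'd) \<Rightarrow> ('a \<Rightarrow> 'a \<Rightarrow> 'd) \<Rightarrow> ('o \<Rightarrow> 'd) \<Rightarrow> bool" where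
  "lax_structure K K' F0 F1 F2 L2 L0 \<longleftrightarrow>
    (\<forall>f\<in>hom K. \<forall>g\<in>hom K. trg K f = src K g \<longrightarrow>
        cell_in K' (L2 g f) (comp K' (F1 g) (F1 f)) (F1 (comp K g f))) \<and>
    (\<forall>A\<in>ob K. cell_in K' (L0 A) (idc K' (F0 A)) (F1 (idc K A))) \<and>
    (\<forall>\<alpha>\<in>cell K. \<forall>\<beta>\<in>cell K. trg K (dom2 K \<alpha>) = src K (dom2 K \<beta>) \<longrightarrow>
        vcomp K' (F2 (hcomp K \<beta> \<alpha>)) (L2 (dom2 K \<beta>) (dom2 K \<alpha>))
          = vcomp K' (L2 (cod2 K \<beta>) (cod2 K \<alpha>)) (hcomp K' (F2 \<beta>) (F2 \<alpha>))) \<and>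
    (\<forall>f\<in>hom K. \<forall>g\<in>hom K. \<forall>h\<in>hom K. trg K f = src K g \<and> trg K g = src K h \<longrightarrow>
        vcomp K' (L2 (comp K h g) f) (hcomp K' (L2 h g) (id2 K' (F1 f)))
          = vcomp K' (L2 h (comp K g f)) (hcomp K' (id2 K' (F1 h)) (L2 g f))) \<and>
    (\<forall>f\<in>hom K. vcomp K' (L2 (idc K (trg K f)) f) (hcomp K' (L0 (trg K f)) (id2 K' (F1 f)))
          = id2 K' (F1 f) \<and>
        vcomp K' (L2 f (idc K (src K f))) (hcomp K' (id2 K' (F1 f)) (L0 (src K f)))
          = id2 K' (F1 f))"

text \<open>Colax structure: C2 g f = F_{2;g,f} : F (g f) => F g o F f, C0 A = F_{0;A} : F(id_A) => id.\<close>
definition colax_structure :: "('o,'a,'c) twocat \<Rightarrow> ('p,'b,'d) twocat \<Rightarrow>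
    ('o \<Rightarrow> 'p) \<Rightarrow> ('a \<Rightarrow> 'b) \<Rightarrow> ('c \<Rightarrow> 'd) \<Rightarrow> ('a \<Rightarrow> 'a \<Rightarrow> 'd) \<Rightarrow> ('o \<Rightarrow> 'd) \<Rightarrow> bool" where
  "colax_structure K K' F0 F1 F2 C2 C0 \<longleftrightarrow>
    (\<forall>f\<in>hom K. \<forall>g\<in>hom K. trg K f = src K g \<longrightarrow>
        cell_in K' (C2 g f) (F1 (comp K g f)) (comp K' (F1 g) (F1 f))) \<and>
    (\<forall>A\<in>ob K. cell_in K' (C0 A) (F1 (idc K A)) (idc K' (F0 A))) \<and>
    (\<forall>\<alpha>\<in>cell K. \<forall>\<beta>\<in>cell K. trg K (dom2 K \<alpha>) = src K (dom2 K \<beta>) \<longrightarrow>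
        vcomp K' (hcomp K' (F2 \<beta>) (F2 \<alpha>)) (C2 (dom2 K \<beta>) (dom2 K \<alpha>))
          = vcomp K' (C2 (cod2 K \<beta>) (cod2 K \<alpha>)) (F2 (hcomp K \<beta> \<alpha>))) \<and>
    (\<forall>f\<in>hom K. \<forall>g\<in>hom K. \<forall>h\<in>hom K. trg K f = src K g \<and> trg K g = src K h \<longrightarrow>
        vcomp K' (hcomp K' (C2 h g) (id2 K' (F1 f))) (C2 (comp K h g) f)
          = vcomp K' (hcomp K' (id2 K' (F1 h)) (C2 g f)) (C2 h (comp K g f))) \<and>
    (\<forall>f\<in>hom K. vcomp K' (hcomp K' (C0 (trg K f)) (id2 K' (F1 f))) (C2 (idc K (trg K f)) f)
          = id2 K' (F1 f) \<and>
        vcomp K' (hcomp K' (id2 K' (F1 f)) (C0 (src K f))) (C2 f (idc K (src K f)))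
          = id2 K' (F1 f))"

text \<open>Bilax functor (F, nu) : (K, c) -> K'. Here nu g f = nu_{g,f} : F g o F f => F f o F g.\<close>
definition bilax_functor :: "('o,'a,'c) twocat \<Rightarrow> ('a \<Rightarrow> 'a \<Rightarrow> 'c) \<Rightarrow> ('p,'b,'d) twocat \<Rightarrow>
    ('o \<Rightarrow> 'p) \<Rightarrow> ('a \<Rightarrow> 'b) \<Rightarrow> ('c \<Rightarrow> 'd) \<Rightarrow>
    ('a \<Rightarrow> 'a \<Rightarrow> 'd) \<Rightarrow> ('o \<Rightarrow> 'd) \<Rightarrow> ('a \<Rightarrow> 'a \<Rightarrow> 'd) \<Rightarrow> ('o \<Rightarrow> 'd) \<Rightarrow>
    ('a \<Rightarrow> 'a \<Rightarrow> 'd) \<Rightarrow> bool" where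
  "bilax_functor K c K' F0 F1 F2 L2 L0 C2 C0 \<nu> \<longleftrightarrow>
    functor_data K K' F0 F1 F2 \<and>
    lax_structure K K' F0 F1 F2 L2 L0 \<and>
    colax_structure K K' F0 F1 F2 C2 C0 \<and>
    \<comment> \<open>typing of nu\<close>
    (\<forall>A\<in>ob K. \<forall>f g. endo K A f \<and> endo K A g \<longrightarrow>
        cell_in K' (\<nu> g f) (comp K' (F1 g) (F1 f)) (comp K' (F1 f) (F1 g))) \<and>
    \<comment> \<open>naturality of nu\<close>
    (\<forall>A\<in>ob K. \<forall>\<alpha>\<in>cell K. \<forall>\<beta>\<in>cell K. endo K A (dom2 K \<alpha>) \<and> endo K A (dom2 K \<beta>) \<longrightarrow>
        vcomp K' (\<nu> (cod2 K \<beta>) (cod2 K \<alpha>)) (hcomp K' (F2 \<beta>) (F2 \<alpha>))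
          = vcomp K' (hcomp K' (F2 \<alpha>) (F2 \<beta>)) (\<nu> (dom2 K \<beta>) (dom2 K \<alpha>))) \<and>
    \<comment> \<open>Yang--Baxter equation\<close>
    (\<forall>A\<in>ob K. \<forall>f g h. endo K A f \<and> endo K A g \<and> endo K A h \<longrightarrow>
        vcomp K' (hcomp K' (\<nu> g f) (id2 K' (F1 h)))
          (vcomp K' (hcomp K' (id2 K' (F1 g)) (\<nu> h f)) (hcomp K' (\<nu> h g) (id2 K' (F1 f))))
        = vcomp K' (hcomp K' (id2 K' (F1 f)) (\<nu> h g))
          (vcomp K' (hcomp K' (\<nu> h f) (id2 K' (F1 g))) (hcomp K' (id2 K' (F1 h)) (\<nu> g f)))) \<and>
    \<comment> \<open>unit conditions\<close>
    (\<forall>A\<in>ob K. \<forall>f. endo K A f \<longrightarrow>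
        vcomp K' (hcomp K' (id2 K' (F1 f)) (C0 A))
          (vcomp K' (\<nu> (idc K A) f) (hcomp K' (L0 A) (id2 K' (F1 f)))) = id2 K' (F1 f) \<and>
        vcomp K' (hcomp K' (C0 A) (id2 K' (F1 f)))
          (vcomp K' (\<nu> f (idc K A)) (hcomp K' (id2 K' (F1 f)) (L0 A))) = id2 K' (F1 f)) \<and>
    \<comment> \<open>compatibility of nu with the lax structure\<close>
    (\<forall>A\<in>ob K. \<forall>f g h. endo K A f \<and> endo K A g \<and> endo K A h \<longrightarrow>
        vcomp K' (\<nu> (comp K h g) f) (hcomp K' (L2 h g) (id2 K' (F1 f)))
          = vcomp K' (hcomp K' (id2 K' (F1 f)) (L2 h g))
              (vcomp K' (hcomp K' (\<nu> h f) (id2 K' (F1 g))) (hcomp K' (id2 K' (F1 h)) (\<nu> g f)))) \<and>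
    (\<forall>A\<in>ob K. \<forall>f. endo K A f \<longrightarrow>
        vcomp K' (\<nu> (idc K A) f) (hcomp K' (L0 A) (id2 K' (F1 f)))
          = hcomp K' (id2 K' (F1 f)) (L0 A)) \<and>
    (\<forall>A\<in>ob K. \<forall>f g h. endo K A f \<and> endo K A g \<and> endo K A h \<longrightarrow>
        vcomp K' (\<nu> h (comp K g f)) (hcomp K' (id2 K' (F1 h)) (L2 g f))
          = vcomp K' (hcomp K' (L2 g f) (id2 K' (F1 h)))
              (vcomp K' (hcomp K' (id2 K' (F1 g)) (\<nu> h f)) (hcomp K' (\<nu> h g) (id2 K' (F1 f))))) \<and>
    (\<forall>A\<in>ob K. \<forall>f. endo K A f \<longrightarrow>
        vcomp K' (\<nu> f (idc K A)) (hcomp K' (id2 K' (F1 f)) (L0 A))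
          = hcomp K' (L0 A) (id2 K' (F1 f))) \<and>
    \<comment> \<open>compatibility of nu with the colax structure\<close>
    (\<forall>A\<in>ob K. \<forall>f g h. endo K A f \<and> endo K A g \<and> endo K A h \<longrightarrow>
        vcomp K' (hcomp K' (C2 h g) (id2 K' (F1 f))) (\<nu> f (comp K h g))
          = vcomp K' (hcomp K' (id2 K' (F1 h)) (\<nu> f g))
              (vcomp K' (hcomp K' (\<nu> f h) (id2 K' (F1 g))) (hcomp K' (id2 K' (F1 f)) (C2 h g)))) \<and>
    (\<forall>A\<in>ob K. \<forall>f. endo K A f \<longrightarrow>
        vcomp K' (hcomp K' (C0 A) (id2 K' (F1 f))) (\<nu> f (idc K A))
          = hcomp K' (id2 K' (F1 f)) (C0 A)) \<and>
    (\<forall>A\<in>ob K. \<forall>f g h. endo K A f \<and> endo K A g \<and> endo K A h \<longrightarrow>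
        vcomp K' (hcomp K' (id2 K' (F1 h)) (C2 g f)) (\<nu> (comp K g f) h)
          = vcomp K' (hcomp K' (\<nu> g h) (id2 K' (F1 f)))
              (vcomp K' (hcomp K' (id2 K' (F1 g)) (\<nu> f h)) (hcomp K' (C2 g f) (id2 K' (F1 h))))) \<and>
    (\<forall>A\<in>ob K. \<forall>f. endo K A f \<longrightarrow>
        vcomp K' (hcomp K' (id2 K' (F1 f)) (C0 A)) (\<nu> (idc K A) f)
          = hcomp K' (C0 A) (id2 K' (F1 f))) \<and>
    \<comment> \<open>bilax compatibility, for A -k-> B -h-> B -f-> B -g-> C\<close>
    (\<forall>k\<in>hom K. \<forall>g\<in>hom K. \<forall>f h. endo K (trg K k) f \<and> endo K (trg K k) h \<and> src K g = trg K k \<longrightarrow>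
        vcomp K' (hcomp K' (L2 g h) (L2 f k))
          (vcomp K' (hcomp K' (id2 K' (F1 g)) (hcomp K' (\<nu> f h) (id2 K' (F1 k))))
             (hcomp K' (C2 g f) (C2 h k)))
        = vcomp K' (C2 (comp K g h) (comp K f k))
            (vcomp K' (F2 (hcomp K (id2 K g) (hcomp K (c f h) (id2 K k))))
               (L2 (comp K g f) (comp K h k)))) \<and>
    (\<forall>A\<in>ob K.
        hcomp K' (L0 A) (L0 A) = vcomp K' (C2 (idc K A) (idc K A)) (L0 A) \<and>
        hcomp K' (C0 A) (C0 A) = vcomp K' (C0 A) (L2 (idc K A) (idc K A)) \<and>
        vcomp K' (C0 A) (L0 A) = id2 K' (idc K' (F0 A)))"

end

theory Submission
  imports Defs
begin

(* Each axiom of the \<nu>-bimonad F(b) is the image under F of the corresponding axiom of b, moved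
   past the structure cells of F: the monad laws use the lax structure F^2, F^0, the comonad laws
   the colax structure F_2, F_0, and the distributive laws only naturality of \<nu> and its
   compatibility with these four families.  The bimonad law relating \<mu> and \<Delta> is the one place
   where the bilax condition is needed: it turns the middle factor 1 o \<nu> o 1 of the lifted
   law into the image of 1 o c o 1, sandwiched between F_2 and F^2, after which naturality of
   F_2 and F^2 reduces it to F applied to the law for b. *)

named_theorems cell_simps

definition distributive_over_monad ::
    "('o, 'a, 'c) twocat \<Rightarrow> 'a \<Rightarrow> 'c \<Rightarrow> 'c \<Rightarrow> 'c \<Rightarrow> bool" where
  "distributive_over_monad K b \<mu> \<eta> \<tau> \<longleftrightarrow>
    vcomp K \<tau> (hcomp K \<mu> (id2 K b))
      = vcomp K (hcomp K (id2 K b) \<mu>) (vcomp K (hcomp K \<tau> (id2 K b)) (hcomp K (id2 K b) \<tau>)) \<and>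
    vcomp K \<tau> (hcomp K \<eta> (id2 K b)) = hcomp K (id2 K b) \<eta> \<and>
    vcomp K \<tau> (hcomp K (id2 K b) \<mu>)
      = vcomp K (hcomp K \<mu> (id2 K b)) (vcomp K (hcomp K (id2 K b) \<tau>) (hcomp K \<tau> (id2 K b))) \<and>
    vcomp K \<tau> (hcomp K (id2 K b) \<eta>) = hcomp K \<eta> (id2 K b)"

definition distributive_over_comonad ::
    "('o, 'a, 'c) twocat \<Rightarrow> 'a \<Rightarrow> 'c \<Rightarrow> 'c \<Rightarrow> 'c \<Rightarrow> bool" where
  "distributive_over_comonad K b \<Delta> \<epsilon> \<tau> \<longleftrightarrow>
    vcomp K (hcomp K \<Delta> (id2 K b)) \<tau>
      = vcomp K (hcomp K (id2 K b) \<tau>) (vcomp K (hcomp K \<tau> (id2 K b)) (hcomp K (id2 K b) \<Delta>)) \<and>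
    vcomp K (hcomp K \<epsilon> (id2 K b)) \<tau> = hcomp K (id2 K b) \<epsilon> \<and>
    vcomp K (hcomp K (id2 K b) \<Delta>) \<tau>
      = vcomp K (hcomp K \<tau> (id2 K b)) (vcomp K (hcomp K (id2 K b) \<tau>) (hcomp K \<Delta> (id2 K b))) \<and>
    vcomp K (hcomp K (id2 K b) \<epsilon>) \<tau> = hcomp K \<epsilon> (id2 K b)"

definition bimonad_compatible ::
    "('o, 'a, 'c) twocat \<Rightarrow> 'o \<Rightarrow> 'a \<Rightarrow> 'c \<Rightarrow> 'c \<Rightarrow> 'c \<Rightarrow> 'c \<Rightarrow> 'c \<Rightarrow> bool" where
  "bimonad_compatible K A b \<mu> \<eta> \<Delta> \<epsilon> \<tau> \<longleftrightarrow>
    vcomp K (hcomp K \<mu> \<mu>) (vcomp K (hcomp K (id2 K b) (hcomp K \<tau> (id2 K b))) (hcomp K \<Delta> \<Delta>))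
      = vcomp K \<Delta> \<mu> \<and>
    hcomp K \<epsilon> \<epsilon> = vcomp K \<epsilon> \<mu> \<and>
    hcomp K \<eta> \<eta> = vcomp K \<Delta> \<eta> \<and>
    vcomp K \<epsilon> \<eta> = id2 K (idc K A)"

lemma tau_bimonad_iff:
  "tau_bimonad K A b \<mu> \<eta> \<Delta> \<epsilon> \<tau> \<longleftrightarrow>
    monad2 K A b \<mu> \<eta> \<and> comonad2 K A b \<Delta> \<epsilon> \<and> cell_in K \<tau> (comp K b b) (comp K b b) \<and>
    distributive_over_monad K b \<mu> \<eta> \<tau> \<and> distributive_over_comonad K b \<Delta> \<epsilon> \<tau> \<and>
    bimonad_compatible K A b \<mu> \<eta> \<Delta> \<epsilon> \<tau>"
  unfolding tau_bimonad_def distributive_over_monad_def distributive_over_comonad_def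
    bimonad_compatible_def
  by blast

locale strict_two_category =
  fixes K :: "('o, 'a, 'c) twocat"
  assumes strict_2cat: "strict_2cat K"
begin

lemma src_in_ob [cell_simps]: "f \<in> hom K \<Longrightarrow> src K f \<in> ob K"
  and trg_in_ob [cell_simps]: "f \<in> hom K \<Longrightarrow> trg K f \<in> ob K"
  and idc_in_hom [cell_simps]: "X \<in> ob K \<Longrightarrow> idc K X \<in> hom K"
  and src_idc [cell_simps]: "X \<in> ob K \<Longrightarrow> src K (idc K X) = X"
  and trg_idc [cell_simps]: "X \<in> ob K \<Longrightarrow> trg K (idc K X) = X"
  and comp_in_hom [cell_simps]: "f \<in> hom K \<Longrightarrow> g \<in> hom K \<Longrightarrow> trg K f = src K g \<Longrightarrow> comp K g f \<in> hom K"
  and src_comp [cell_simps]: "f \<in> hom K \<Longrightarrow> g \<in> hom K \<Longrightarrow> trg K f = src K g \<Longrightarrow> src K (comp K g f) = src K f"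
  and trg_comp [cell_simps]: "f \<in> hom K \<Longrightarrow> g \<in> hom K \<Longrightarrow> trg K f = src K g \<Longrightarrow> trg K (comp K g f) = trg K g"
  and comp_idc_left [cell_simps]: "f \<in> hom K \<Longrightarrow> trg K f = X \<Longrightarrow> comp K (idc K X) f = f"
  and comp_idc_right [cell_simps]: "f \<in> hom K \<Longrightarrow> src K f = X \<Longrightarrow> comp K f (idc K X) = f"
  and comp_assoc [cell_simps]: "f \<in> hom K \<Longrightarrow> g \<in> hom K \<Longrightarrow> h \<in> hom K \<Longrightarrow> trg K f = src K g \<Longrightarrow>
    trg K g = src K h \<Longrightarrow> comp K h (comp K g f) = comp K (comp K h g) f"
  and dom2_in_hom [cell_simps]: "\<alpha> \<in> cell K \<Longrightarrow> dom2 K \<alpha> \<in> hom K"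
  and cod2_in_hom [cell_simps]: "\<alpha> \<in> cell K \<Longrightarrow> cod2 K \<alpha> \<in> hom K"
  and src_cod2 [cell_simps]: "\<alpha> \<in> cell K \<Longrightarrow> src K (cod2 K \<alpha>) = src K (dom2 K \<alpha>)"
  and trg_cod2 [cell_simps]: "\<alpha> \<in> cell K \<Longrightarrow> trg K (cod2 K \<alpha>) = trg K (dom2 K \<alpha>)"
  and id2_in_cell [cell_simps]: "f \<in> hom K \<Longrightarrow> id2 K f \<in> cell K"
  and dom2_id2 [cell_simps]: "f \<in> hom K \<Longrightarrow> dom2 K (id2 K f) = f"
  and cod2_id2 [cell_simps]: "f \<in> hom K \<Longrightarrow> cod2 K (id2 K f) = f"
  and vcomp_in_cell [cell_simps]: "\<alpha> \<in> cell K \<Longrightarrow> \<beta> \<in> cell K \<Longrightarrow> cod2 K \<alpha> = dom2 K \<beta> \<Longrightarrow>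
    vcomp K \<beta> \<alpha> \<in> cell K"
  and dom2_vcomp [cell_simps]: "\<alpha> \<in> cell K \<Longrightarrow> \<beta> \<in> cell K \<Longrightarrow> cod2 K \<alpha> = dom2 K \<beta> \<Longrightarrow>
    dom2 K (vcomp K \<beta> \<alpha>) = dom2 K \<alpha>"
  and cod2_vcomp [cell_simps]: "\<alpha> \<in> cell K \<Longrightarrow> \<beta> \<in> cell K \<Longrightarrow> cod2 K \<alpha> = dom2 K \<beta> \<Longrightarrow>
    cod2 K (vcomp K \<beta> \<alpha>) = cod2 K \<beta>"
  and hcomp_in_cell [cell_simps]: "\<alpha> \<in> cell K \<Longrightarrow> \<beta> \<in> cell K \<Longrightarrow> trg K (dom2 K \<alpha>) = src K (dom2 K \<beta>) \<Longrightarrow>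
    hcomp K \<beta> \<alpha> \<in> cell K"
  and dom2_hcomp [cell_simps]: "\<alpha> \<in> cell K \<Longrightarrow> \<beta> \<in> cell K \<Longrightarrow> trg K (dom2 K \<alpha>) = src K (dom2 K \<beta>) \<Longrightarrow>
    dom2 K (hcomp K \<beta> \<alpha>) = comp K (dom2 K \<beta>) (dom2 K \<alpha>)"
  and cod2_hcomp [cell_simps]: "\<alpha> \<in> cell K \<Longrightarrow> \<beta> \<in> cell K \<Longrightarrow> trg K (dom2 K \<alpha>) = src K (dom2 K \<beta>) \<Longrightarrow>
    cod2 K (hcomp K \<beta> \<alpha>) = comp K (cod2 K \<beta>) (cod2 K \<alpha>)"
  using strict_2cat unfolding strict_2cat_def cell_in_def by auto


lemma vcomp_id2_right: "\<alpha> \<in> cell K \<Longrightarrow> dom2 K \<alpha> = f \<Longrightarrow> vcomp K \<alpha> (id2 K f) = \<alpha>"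
  and vcomp_id2_left: "\<alpha> \<in> cell K \<Longrightarrow> cod2 K \<alpha> = f \<Longrightarrow> vcomp K (id2 K f) \<alpha> = \<alpha>"
  and vcomp_assoc: "\<alpha> \<in> cell K \<Longrightarrow> \<beta> \<in> cell K \<Longrightarrow> \<gamma> \<in> cell K \<Longrightarrow> cod2 K \<alpha> = dom2 K \<beta> \<Longrightarrow>
    cod2 K \<beta> = dom2 K \<gamma> \<Longrightarrow> vcomp K (vcomp K \<gamma> \<beta>) \<alpha> = vcomp K \<gamma> (vcomp K \<beta> \<alpha>)"
  and interchange: "\<alpha> \<in> cell K \<Longrightarrow> \<alpha>' \<in> cell K \<Longrightarrow> \<beta> \<in> cell K \<Longrightarrow> \<beta>' \<in> cell K \<Longrightarrow>
    cod2 K \<alpha> = dom2 K \<alpha>' \<Longrightarrow> cod2 K \<beta> = dom2 K \<beta>' \<Longrightarrow> trg K (dom2 K \<alpha>) = src K (dom2 K \<beta>) \<Longrightarrow>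
    hcomp K (vcomp K \<beta>' \<beta>) (vcomp K \<alpha>' \<alpha>) = vcomp K (hcomp K \<beta>' \<alpha>') (hcomp K \<beta> \<alpha>)"
  using strict_2cat unfolding strict_2cat_def by auto

lemma whisker_right_vcomp:
  "\<beta> \<in> cell K \<Longrightarrow> \<beta>' \<in> cell K \<Longrightarrow> cod2 K \<beta> = dom2 K \<beta>' \<Longrightarrow> f \<in> hom K \<Longrightarrow>
    trg K f = src K (dom2 K \<beta>) \<Longrightarrow>
    hcomp K (vcomp K \<beta>' \<beta>) (id2 K f) = vcomp K (hcomp K \<beta>' (id2 K f)) (hcomp K \<beta> (id2 K f))"
  by (metis id2_in_cell dom2_id2 cod2_id2 vcomp_id2_right interchange)

lemma whisker_left_vcomp:
  "\<alpha> \<in> cell K \<Longrightarrow> \<alpha>' \<in> cell K \<Longrightarrow> cod2 K \<alpha> = dom2 K \<alpha>' \<Longrightarrow> g \<in> hom K \<Longrightarrow>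
    trg K (dom2 K \<alpha>) = src K g \<Longrightarrow>
    hcomp K (id2 K g) (vcomp K \<alpha>' \<alpha>) = vcomp K (hcomp K (id2 K g) \<alpha>') (hcomp K (id2 K g) \<alpha>)"
  by (metis id2_in_cell dom2_id2 cod2_id2 vcomp_id2_right interchange)

lemma vcomp_rewrite:
  assumes "vcomp K \<beta> \<alpha> = \<gamma>" "\<alpha> \<in> cell K" "\<beta> \<in> cell K" "\<rho> \<in> cell K"
    "cod2 K \<rho> = dom2 K \<alpha>" "cod2 K \<alpha> = dom2 K \<beta>"
  shows "vcomp K \<beta> (vcomp K \<alpha> \<rho>) = vcomp K \<gamma> \<rho>"
  using assms vcomp_assoc by metis

lemma vcomp_rewrite3:
  assumes "vcomp K \<gamma> (vcomp K \<beta> \<alpha>) = \<delta>" "\<alpha> \<in> cell K" "\<beta> \<in> cell K" "\<gamma> \<in> cell K" "\<rho> \<in> cell K"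
    "cod2 K \<rho> = dom2 K \<alpha>" "cod2 K \<alpha> = dom2 K \<beta>" "cod2 K \<beta> = dom2 K \<gamma>"
  shows "vcomp K \<gamma> (vcomp K \<beta> (vcomp K \<alpha> \<rho>)) = vcomp K \<delta> \<rho>"
  using assms vcomp_assoc vcomp_in_cell dom2_vcomp cod2_vcomp by metis

text \<open>Simplifying with \<open>normalize\<close> keeps vertical composites right-nested and pushes whiskering
  inside them; \<open>vcomp_rewrite\<close> and \<open>vcomp_rewrite3\<close> then let an equation between composites
  of two or three cells rewrite a segment of such a chain.\<close>

lemmas normalize = vcomp_assoc whisker_right_vcomp whisker_left_vcomp vcomp_id2_left vcomp_id2_right

lemma endo_in_ob: "endo K A f \<Longrightarrow> A \<in> ob K"
  using src_in_ob unfolding endo_def by blast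

lemma monad2_cells:
  assumes "monad2 K A b \<mu> \<eta>"
  shows "A \<in> ob K" "b \<in> hom K" "src K b = A" "trg K b = A"
    "\<mu> \<in> cell K" "dom2 K \<mu> = comp K b b" "cod2 K \<mu> = b"
    "\<eta> \<in> cell K" "dom2 K \<eta> = idc K A" "cod2 K \<eta> = b"
  using assms endo_in_ob unfolding monad2_def endo_def cell_in_def by auto

lemma monad2_laws:
  assumes "monad2 K A b \<mu> \<eta>"
  shows "vcomp K \<mu> (hcomp K \<mu> (id2 K b)) = vcomp K \<mu> (hcomp K (id2 K b) \<mu>)"
    "vcomp K \<mu> (hcomp K \<eta> (id2 K b)) = id2 K b"
    "vcomp K \<mu> (hcomp K (id2 K b) \<eta>) = id2 K b"
  using assms unfolding monad2_def by auto

lemma comonad2_cells: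
  assumes "comonad2 K A b \<Delta> \<epsilon>"
  shows "A \<in> ob K" "b \<in> hom K" "src K b = A" "trg K b = A"
    "\<Delta> \<in> cell K" "dom2 K \<Delta> = b" "cod2 K \<Delta> = comp K b b"
    "\<epsilon> \<in> cell K" "dom2 K \<epsilon> = b" "cod2 K \<epsilon> = idc K A"
  using assms endo_in_ob unfolding comonad2_def endo_def cell_in_def by auto

lemma comonad2_laws:
  assumes "comonad2 K A b \<Delta> \<epsilon>"
  shows "vcomp K (hcomp K \<Delta> (id2 K b)) \<Delta> = vcomp K (hcomp K (id2 K b) \<Delta>) \<Delta>"
    "vcomp K (hcomp K \<epsilon> (id2 K b)) \<Delta> = id2 K b"
    "vcomp K (hcomp K (id2 K b) \<epsilon>) \<Delta> = id2 K b"
  using assms unfolding comonad2_def by auto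

end

locale locally_functorial =
  K: strict_two_category K + K': strict_two_category K'
  for K :: "('o, 'a, 'c) twocat" and K' :: "('p, 'b, 'd) twocat" +
  fixes F0 :: "'o \<Rightarrow> 'p" and F1 :: "'a \<Rightarrow> 'b" and F2 :: "'c \<Rightarrow> 'd"
  assumes functor_data: "functor_data K K' F0 F1 F2"
begin

lemma F0_in_ob [cell_simps]: "X \<in> ob K \<Longrightarrow> F0 X \<in> ob K'"
  and F1_in_hom [cell_simps]: "f \<in> hom K \<Longrightarrow> F1 f \<in> hom K'"
  and src_F1 [cell_simps]: "f \<in> hom K \<Longrightarrow> src K' (F1 f) = F0 (src K f)"
  and trg_F1 [cell_simps]: "f \<in> hom K \<Longrightarrow> trg K' (F1 f) = F0 (trg K f)"
  and F2_in_cell [cell_simps]: "\<alpha> \<in> cell K \<Longrightarrow> F2 \<alpha> \<in> cell K'"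
  and dom2_F2 [cell_simps]: "\<alpha> \<in> cell K \<Longrightarrow> dom2 K' (F2 \<alpha>) = F1 (dom2 K \<alpha>)"
  and cod2_F2 [cell_simps]: "\<alpha> \<in> cell K \<Longrightarrow> cod2 K' (F2 \<alpha>) = F1 (cod2 K \<alpha>)"
  and F2_id2 [cell_simps]: "f \<in> hom K \<Longrightarrow> F2 (id2 K f) = id2 K' (F1 f)"
  and F2_vcomp: "\<alpha> \<in> cell K \<Longrightarrow> \<beta> \<in> cell K \<Longrightarrow> cod2 K \<alpha> = dom2 K \<beta> \<Longrightarrow>
    F2 (vcomp K \<beta> \<alpha>) = vcomp K' (F2 \<beta>) (F2 \<alpha>)"
  using functor_data unfolding functor_data_def cell_in_def by auto


end

locale lax_functor = locally_functorial K K' F0 F1 F2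
  for K :: "('o, 'a, 'c) twocat" and K' :: "('p, 'b, 'd) twocat"
    and F0 :: "'o \<Rightarrow> 'p" and F1 :: "'a \<Rightarrow> 'b" and F2 :: "'c \<Rightarrow> 'd" +
  fixes L2 :: "'a \<Rightarrow> 'a \<Rightarrow> 'd" and L0 :: "'o \<Rightarrow> 'd"
  assumes lax_structure: "lax_structure K K' F0 F1 F2 L2 L0"
begin

abbreviation mult_image :: "'a \<Rightarrow> 'c \<Rightarrow> 'd" where
  "mult_image b \<mu> \<equiv> vcomp K' (F2 \<mu>) (L2 b b)"

abbreviation unit_image :: "'o \<Rightarrow> 'c \<Rightarrow> 'd" where
  "unit_image A \<eta> \<equiv> vcomp K' (F2 \<eta>) (L0 A)"

lemma L2_in_cell [cell_simps]: "f \<in> hom K \<Longrightarrow> g \<in> hom K \<Longrightarrow> trg K f = src K g \<Longrightarrow> L2 g f \<in> cell K'"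
  and dom2_L2 [cell_simps]: "f \<in> hom K \<Longrightarrow> g \<in> hom K \<Longrightarrow> trg K f = src K g \<Longrightarrow>
    dom2 K' (L2 g f) = comp K' (F1 g) (F1 f)"
  and cod2_L2 [cell_simps]: "f \<in> hom K \<Longrightarrow> g \<in> hom K \<Longrightarrow> trg K f = src K g \<Longrightarrow>
    cod2 K' (L2 g f) = F1 (comp K g f)"
  and L0_in_cell [cell_simps]: "X \<in> ob K \<Longrightarrow> L0 X \<in> cell K'"
  and dom2_L0 [cell_simps]: "X \<in> ob K \<Longrightarrow> dom2 K' (L0 X) = idc K' (F0 X)"
  and cod2_L0 [cell_simps]: "X \<in> ob K \<Longrightarrow> cod2 K' (L0 X) = F1 (idc K X)"
  using lax_structure unfolding lax_structure_def cell_in_def by auto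


lemma L2_natural: "\<alpha> \<in> cell K \<Longrightarrow> \<beta> \<in> cell K \<Longrightarrow> trg K (dom2 K \<alpha>) = src K (dom2 K \<beta>) \<Longrightarrow>
    vcomp K' (F2 (hcomp K \<beta> \<alpha>)) (L2 (dom2 K \<beta>) (dom2 K \<alpha>))
      = vcomp K' (L2 (cod2 K \<beta>) (cod2 K \<alpha>)) (hcomp K' (F2 \<beta>) (F2 \<alpha>))"
  and L2_assoc: "f \<in> hom K \<Longrightarrow> g \<in> hom K \<Longrightarrow> h \<in> hom K \<Longrightarrow> trg K f = src K g \<Longrightarrow>
    trg K g = src K h \<Longrightarrow>
    vcomp K' (L2 (comp K h g) f) (hcomp K' (L2 h g) (id2 K' (F1 f)))
      = vcomp K' (L2 h (comp K g f)) (hcomp K' (id2 K' (F1 h)) (L2 g f))"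
  and L2_L0_left: "f \<in> hom K \<Longrightarrow>
    vcomp K' (L2 (idc K (trg K f)) f) (hcomp K' (L0 (trg K f)) (id2 K' (F1 f))) = id2 K' (F1 f)"
  and L2_L0_right: "f \<in> hom K \<Longrightarrow>
    vcomp K' (L2 f (idc K (src K f))) (hcomp K' (id2 K' (F1 f)) (L0 (src K f))) = id2 K' (F1 f)"
  using lax_structure unfolding lax_structure_def by auto

lemma monad_image:
  assumes monad: "monad2 K A b \<mu> \<eta>"
  shows "monad2 K' (F0 A) (F1 b) (mult_image b \<mu>) (unit_image A \<eta>)"
proof -
  note T = cell_simps K.monad2_cells[OF monad]
  have nat_mult_left: "vcomp K' (L2 b b) (hcomp K' (F2 \<mu>) (id2 K' (F1 b)))
      = vcomp K' (F2 (hcomp K \<mu> (id2 K b))) (L2 (comp K b b) b)"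
    and nat_mult_right: "vcomp K' (L2 b b) (hcomp K' (id2 K' (F1 b)) (F2 \<mu>))
      = vcomp K' (F2 (hcomp K (id2 K b) \<mu>)) (L2 b (comp K b b))"
    and nat_unit_left: "vcomp K' (L2 b b) (hcomp K' (F2 \<eta>) (id2 K' (F1 b)))
      = vcomp K' (F2 (hcomp K \<eta> (id2 K b))) (L2 (idc K A) b)"
    and nat_unit_right: "vcomp K' (L2 b b) (hcomp K' (id2 K' (F1 b)) (F2 \<eta>))
      = vcomp K' (F2 (hcomp K (id2 K b) \<eta>)) (L2 b (idc K A))"
    using L2_natural[of "id2 K b" \<mu>] L2_natural[of \<mu> "id2 K b"]
      L2_natural[of "id2 K b" \<eta>] L2_natural[of \<eta> "id2 K b"]
    by (simp_all add: T)
  have L2_assoc_b: "vcomp K' (L2 (comp K b b) b) (hcomp K' (L2 b b) (id2 K' (F1 b)))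
      = vcomp K' (L2 b (comp K b b)) (hcomp K' (id2 K' (F1 b)) (L2 b b))"
    and L2_L0_b: "vcomp K' (L2 (idc K A) b) (hcomp K' (L0 A) (id2 K' (F1 b))) = id2 K' (F1 b)"
      "vcomp K' (L2 b (idc K A)) (hcomp K' (id2 K' (F1 b)) (L0 A)) = id2 K' (F1 b)"
    using L2_assoc[of b b b] L2_L0_left[of b] L2_L0_right[of b] by (simp_all add: T)
  have F2_laws: "vcomp K' (F2 \<mu>) (F2 (hcomp K \<mu> (id2 K b)))
      = vcomp K' (F2 \<mu>) (F2 (hcomp K (id2 K b) \<mu>))"
    "vcomp K' (F2 \<mu>) (F2 (hcomp K \<eta> (id2 K b))) = id2 K' (F1 b)"
    "vcomp K' (F2 \<mu>) (F2 (hcomp K (id2 K b) \<eta>)) = id2 K' (F1 b)"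
    using K.monad2_laws[OF monad, THEN arg_cong[where f = F2]] by (simp_all add: T F2_vcomp)
  show ?thesis
    unfolding monad2_def endo_def cell_in_def
  proof (intro conjI)
    show "vcomp K' (mult_image b \<mu>) (hcomp K' (mult_image b \<mu>) (id2 K' (F1 b)))
      = vcomp K' (mult_image b \<mu>) (hcomp K' (id2 K' (F1 b)) (mult_image b \<mu>))"
      by (simp add: T K'.normalize K'.vcomp_rewrite[OF nat_mult_left]
          K'.vcomp_rewrite[OF nat_mult_right] L2_assoc_b K'.vcomp_rewrite[OF F2_laws(1)])
    show "vcomp K' (mult_image b \<mu>) (hcomp K' (unit_image A \<eta>) (id2 K' (F1 b))) = id2 K' (F1 b)"
      by (simp add: T K'.normalize K'.vcomp_rewrite[OF nat_unit_left] L2_L0_b F2_laws)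
    show "vcomp K' (mult_image b \<mu>) (hcomp K' (id2 K' (F1 b)) (unit_image A \<eta>)) = id2 K' (F1 b)"
      by (simp add: T K'.normalize K'.vcomp_rewrite[OF nat_unit_right] L2_L0_b F2_laws)
  qed (simp_all add: T)
qed

end

locale colax_functor = locally_functorial K K' F0 F1 F2
  for K :: "('o, 'a, 'c) twocat" and K' :: "('p, 'b, 'd) twocat"
    and F0 :: "'o \<Rightarrow> 'p" and F1 :: "'a \<Rightarrow> 'b" and F2 :: "'c \<Rightarrow> 'd" +
  fixes C2 :: "'a \<Rightarrow> 'a \<Rightarrow> 'd" and C0 :: "'o \<Rightarrow> 'd"
  assumes colax_structure: "colax_structure K K' F0 F1 F2 C2 C0"
begin

abbreviation comult_image :: "'a \<Rightarrow> 'c \<Rightarrow> 'd" where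
  "comult_image b \<Delta> \<equiv> vcomp K' (C2 b b) (F2 \<Delta>)"

abbreviation counit_image :: "'o \<Rightarrow> 'c \<Rightarrow> 'd" where
  "counit_image A \<epsilon> \<equiv> vcomp K' (C0 A) (F2 \<epsilon>)"

lemma C2_in_cell [cell_simps]: "f \<in> hom K \<Longrightarrow> g \<in> hom K \<Longrightarrow> trg K f = src K g \<Longrightarrow> C2 g f \<in> cell K'"
  and dom2_C2 [cell_simps]: "f \<in> hom K \<Longrightarrow> g \<in> hom K \<Longrightarrow> trg K f = src K g \<Longrightarrow>
    dom2 K' (C2 g f) = F1 (comp K g f)"
  and cod2_C2 [cell_simps]: "f \<in> hom K \<Longrightarrow> g \<in> hom K \<Longrightarrow> trg K f = src K g \<Longrightarrow>
    cod2 K' (C2 g f) = comp K' (F1 g) (F1 f)"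
  and C0_in_cell [cell_simps]: "X \<in> ob K \<Longrightarrow> C0 X \<in> cell K'"
  and dom2_C0 [cell_simps]: "X \<in> ob K \<Longrightarrow> dom2 K' (C0 X) = F1 (idc K X)"
  and cod2_C0 [cell_simps]: "X \<in> ob K \<Longrightarrow> cod2 K' (C0 X) = idc K' (F0 X)"
  using colax_structure unfolding colax_structure_def cell_in_def by auto


lemma C2_natural: "\<alpha> \<in> cell K \<Longrightarrow> \<beta> \<in> cell K \<Longrightarrow> trg K (dom2 K \<alpha>) = src K (dom2 K \<beta>) \<Longrightarrow>
    vcomp K' (hcomp K' (F2 \<beta>) (F2 \<alpha>)) (C2 (dom2 K \<beta>) (dom2 K \<alpha>))
      = vcomp K' (C2 (cod2 K \<beta>) (cod2 K \<alpha>)) (F2 (hcomp K \<beta> \<alpha>))"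
  and C2_coassoc: "f \<in> hom K \<Longrightarrow> g \<in> hom K \<Longrightarrow> h \<in> hom K \<Longrightarrow> trg K f = src K g \<Longrightarrow>
    trg K g = src K h \<Longrightarrow>
    vcomp K' (hcomp K' (C2 h g) (id2 K' (F1 f))) (C2 (comp K h g) f)
      = vcomp K' (hcomp K' (id2 K' (F1 h)) (C2 g f)) (C2 h (comp K g f))"
  and C0_C2_left: "f \<in> hom K \<Longrightarrow>
    vcomp K' (hcomp K' (C0 (trg K f)) (id2 K' (F1 f))) (C2 (idc K (trg K f)) f) = id2 K' (F1 f)"
  and C0_C2_right: "f \<in> hom K \<Longrightarrow>
    vcomp K' (hcomp K' (id2 K' (F1 f)) (C0 (src K f))) (C2 f (idc K (src K f))) = id2 K' (F1 f)"
  using colax_structure unfolding colax_structure_def by auto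

lemma comonad_image:
  assumes comonad: "comonad2 K A b \<Delta> \<epsilon>"
  shows "comonad2 K' (F0 A) (F1 b) (comult_image b \<Delta>) (counit_image A \<epsilon>)"
proof -
  note T = cell_simps K.comonad2_cells[OF comonad]
  have nat_comult_left: "vcomp K' (hcomp K' (F2 \<Delta>) (id2 K' (F1 b))) (C2 b b)
      = vcomp K' (C2 (comp K b b) b) (F2 (hcomp K \<Delta> (id2 K b)))"
    and nat_comult_right: "vcomp K' (hcomp K' (id2 K' (F1 b)) (F2 \<Delta>)) (C2 b b)
      = vcomp K' (C2 b (comp K b b)) (F2 (hcomp K (id2 K b) \<Delta>))"
    and nat_counit_left: "vcomp K' (hcomp K' (F2 \<epsilon>) (id2 K' (F1 b))) (C2 b b)
      = vcomp K' (C2 (idc K A) b) (F2 (hcomp K \<epsilon> (id2 K b)))"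
    and nat_counit_right: "vcomp K' (hcomp K' (id2 K' (F1 b)) (F2 \<epsilon>)) (C2 b b)
      = vcomp K' (C2 b (idc K A)) (F2 (hcomp K (id2 K b) \<epsilon>))"
    using C2_natural[of "id2 K b" \<Delta>] C2_natural[of \<Delta> "id2 K b"]
      C2_natural[of "id2 K b" \<epsilon>] C2_natural[of \<epsilon> "id2 K b"]
    by (simp_all add: T)
  have C2_coassoc_b: "vcomp K' (hcomp K' (C2 b b) (id2 K' (F1 b))) (C2 (comp K b b) b)
      = vcomp K' (hcomp K' (id2 K' (F1 b)) (C2 b b)) (C2 b (comp K b b))"
    and C0_C2_b: "vcomp K' (hcomp K' (C0 A) (id2 K' (F1 b))) (C2 (idc K A) b) = id2 K' (F1 b)"
      "vcomp K' (hcomp K' (id2 K' (F1 b)) (C0 A)) (C2 b (idc K A)) = id2 K' (F1 b)"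
    using C2_coassoc[of b b b] C0_C2_left[of b] C0_C2_right[of b] by (simp_all add: T)
  have F2_laws: "vcomp K' (F2 (hcomp K \<Delta> (id2 K b))) (F2 \<Delta>)
      = vcomp K' (F2 (hcomp K (id2 K b) \<Delta>)) (F2 \<Delta>)"
    "vcomp K' (F2 (hcomp K \<epsilon> (id2 K b))) (F2 \<Delta>) = id2 K' (F1 b)"
    "vcomp K' (F2 (hcomp K (id2 K b) \<epsilon>)) (F2 \<Delta>) = id2 K' (F1 b)"
    using K.comonad2_laws[OF comonad, THEN arg_cong[where f = F2]] by (simp_all add: T F2_vcomp)
  show ?thesis
    unfolding comonad2_def endo_def cell_in_def
  proof (intro conjI)
    show "vcomp K' (hcomp K' (comult_image b \<Delta>) (id2 K' (F1 b))) (comult_image b \<Delta>)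
      = vcomp K' (hcomp K' (id2 K' (F1 b)) (comult_image b \<Delta>)) (comult_image b \<Delta>)"
      by (simp add: T K'.normalize K'.vcomp_rewrite[OF nat_comult_left]
          K'.vcomp_rewrite[OF nat_comult_right] K'.vcomp_rewrite[OF C2_coassoc_b] F2_laws(1))
    show "vcomp K' (hcomp K' (counit_image A \<epsilon>) (id2 K' (F1 b))) (comult_image b \<Delta>) = id2 K' (F1 b)"
      by (simp add: T K'.normalize K'.vcomp_rewrite[OF nat_counit_left]
          K'.vcomp_rewrite[OF C0_C2_b(1)] C0_C2_b F2_laws)
    show "vcomp K' (hcomp K' (id2 K' (F1 b)) (counit_image A \<epsilon>)) (comult_image b \<Delta>) = id2 K' (F1 b)"
      by (simp add: T K'.normalize K'.vcomp_rewrite[OF nat_counit_right]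
          K'.vcomp_rewrite[OF C0_C2_b(2)] C0_C2_b F2_laws)
  qed (simp_all add: T)
qed

end

locale bilax = lax_functor K K' F0 F1 F2 L2 L0 + colax_functor K K' F0 F1 F2 C2 C0
  for K :: "('o, 'a, 'c) twocat" and K' :: "('p, 'b, 'd) twocat"
    and F0 :: "'o \<Rightarrow> 'p" and F1 :: "'a \<Rightarrow> 'b" and F2 :: "'c \<Rightarrow> 'd"
    and L2 :: "'a \<Rightarrow> 'a \<Rightarrow> 'd" and L0 :: "'o \<Rightarrow> 'd"
    and C2 :: "'a \<Rightarrow> 'a \<Rightarrow> 'd" and C0 :: "'o \<Rightarrow> 'd" +
  fixes c :: "'a \<Rightarrow> 'a \<Rightarrow> 'c" and \<nu> :: "'a \<Rightarrow> 'a \<Rightarrow> 'd"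
  assumes yb_operator: "yb_operator K c"
    and bilax_functor: "bilax_functor K c K' F0 F1 F2 L2 L0 C2 C0 \<nu>"
begin

lemma c_cell_in: "A \<in> ob K \<Longrightarrow> endo K A f \<Longrightarrow> endo K A g \<Longrightarrow>
    cell_in K (c g f) (comp K g f) (comp K f g)"
  using yb_operator unfolding yb_operator_def by (elim conjE) blast

lemma nu_cell_in: "A \<in> ob K \<Longrightarrow> endo K A f \<Longrightarrow> endo K A g \<Longrightarrow>
    cell_in K' (\<nu> g f) (comp K' (F1 g) (F1 f)) (comp K' (F1 f) (F1 g))"
  using bilax_functor unfolding bilax_functor_def by (elim conjE) meson

(* The object is fixed as src K f so that simp can discharge the hypotheses. *)
lemma nu_in_cell [cell_simps]: "endo K (src K f) f \<Longrightarrow> endo K (src K f) g \<Longrightarrow> \<nu> g f \<in> cell K'"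
  and dom2_nu [cell_simps]: "endo K (src K f) f \<Longrightarrow> endo K (src K f) g \<Longrightarrow>
    dom2 K' (\<nu> g f) = comp K' (F1 g) (F1 f)"
  and cod2_nu [cell_simps]: "endo K (src K f) f \<Longrightarrow> endo K (src K f) g \<Longrightarrow>
    cod2 K' (\<nu> g f) = comp K' (F1 f) (F1 g)"
  using nu_cell_in[of "src K f" f g] K.src_in_ob unfolding endo_def cell_in_def by auto

lemma nu_natural: "A \<in> ob K \<Longrightarrow> \<alpha> \<in> cell K \<Longrightarrow> \<beta> \<in> cell K \<Longrightarrow>
    endo K A (dom2 K \<alpha>) \<Longrightarrow> endo K A (dom2 K \<beta>) \<Longrightarrow>
    vcomp K' (\<nu> (cod2 K \<beta>) (cod2 K \<alpha>)) (hcomp K' (F2 \<beta>) (F2 \<alpha>))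
      = vcomp K' (hcomp K' (F2 \<alpha>) (F2 \<beta>)) (\<nu> (dom2 K \<beta>) (dom2 K \<alpha>))"
  using bilax_functor unfolding bilax_functor_def by (elim conjE) meson

lemma nu_L2_left: "A \<in> ob K \<Longrightarrow> endo K A f \<Longrightarrow> endo K A g \<Longrightarrow> endo K A h \<Longrightarrow>
    vcomp K' (\<nu> (comp K h g) f) (hcomp K' (L2 h g) (id2 K' (F1 f)))
      = vcomp K' (hcomp K' (id2 K' (F1 f)) (L2 h g))
          (vcomp K' (hcomp K' (\<nu> h f) (id2 K' (F1 g))) (hcomp K' (id2 K' (F1 h)) (\<nu> g f)))"
  and nu_L0_left: "A \<in> ob K \<Longrightarrow> endo K A f \<Longrightarrow>
    vcomp K' (\<nu> (idc K A) f) (hcomp K' (L0 A) (id2 K' (F1 f))) = hcomp K' (id2 K' (F1 f)) (L0 A)"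
  and nu_L2_right: "A \<in> ob K \<Longrightarrow> endo K A f \<Longrightarrow> endo K A g \<Longrightarrow> endo K A h \<Longrightarrow>
    vcomp K' (\<nu> h (comp K g f)) (hcomp K' (id2 K' (F1 h)) (L2 g f))
      = vcomp K' (hcomp K' (L2 g f) (id2 K' (F1 h)))
          (vcomp K' (hcomp K' (id2 K' (F1 g)) (\<nu> h f)) (hcomp K' (\<nu> h g) (id2 K' (F1 f))))"
  and nu_L0_right: "A \<in> ob K \<Longrightarrow> endo K A f \<Longrightarrow>
    vcomp K' (\<nu> f (idc K A)) (hcomp K' (id2 K' (F1 f)) (L0 A)) = hcomp K' (L0 A) (id2 K' (F1 f))"
  using bilax_functor unfolding bilax_functor_def by (elim conjE, meson)+

lemma bilax_compatible: "k \<in> hom K \<Longrightarrow> g \<in> hom K \<Longrightarrow>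
    endo K (trg K k) f \<Longrightarrow> endo K (trg K k) h \<Longrightarrow> src K g = trg K k \<Longrightarrow>
    vcomp K' (hcomp K' (L2 g h) (L2 f k))
      (vcomp K' (hcomp K' (id2 K' (F1 g)) (hcomp K' (\<nu> f h) (id2 K' (F1 k))))
        (hcomp K' (C2 g f) (C2 h k)))
    = vcomp K' (C2 (comp K g h) (comp K f k))
        (vcomp K' (F2 (hcomp K (id2 K g) (hcomp K (c f h) (id2 K k))))
          (L2 (comp K g f) (comp K h k)))"
  using bilax_functor unfolding bilax_functor_def by (elim conjE) meson

lemma C2_nu_right: "A \<in> ob K \<Longrightarrow> endo K A f \<Longrightarrow> endo K A g \<Longrightarrow> endo K A h \<Longrightarrow>
    vcomp K' (hcomp K' (C2 h g) (id2 K' (F1 f))) (\<nu> f (comp K h g))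
      = vcomp K' (hcomp K' (id2 K' (F1 h)) (\<nu> f g))
          (vcomp K' (hcomp K' (\<nu> f h) (id2 K' (F1 g))) (hcomp K' (id2 K' (F1 f)) (C2 h g)))"
  and C0_nu_right: "A \<in> ob K \<Longrightarrow> endo K A f \<Longrightarrow>
    vcomp K' (hcomp K' (C0 A) (id2 K' (F1 f))) (\<nu> f (idc K A)) = hcomp K' (id2 K' (F1 f)) (C0 A)"
  and C2_nu_left: "A \<in> ob K \<Longrightarrow> endo K A f \<Longrightarrow> endo K A g \<Longrightarrow> endo K A h \<Longrightarrow>
    vcomp K' (hcomp K' (id2 K' (F1 h)) (C2 g f)) (\<nu> (comp K g f) h)
      = vcomp K' (hcomp K' (\<nu> g h) (id2 K' (F1 f)))
          (vcomp K' (hcomp K' (id2 K' (F1 g)) (\<nu> f h)) (hcomp K' (C2 g f) (id2 K' (F1 h))))"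
  and C0_nu_left: "A \<in> ob K \<Longrightarrow> endo K A f \<Longrightarrow>
    vcomp K' (hcomp K' (id2 K' (F1 f)) (C0 A)) (\<nu> (idc K A) f) = hcomp K' (C0 A) (id2 K' (F1 f))"
  using bilax_functor unfolding bilax_functor_def by (elim conjE, meson)+

lemma L0_hcomp_L0: "A \<in> ob K \<Longrightarrow> hcomp K' (L0 A) (L0 A) = vcomp K' (C2 (idc K A) (idc K A)) (L0 A)"
  and C0_hcomp_C0: "A \<in> ob K \<Longrightarrow> hcomp K' (C0 A) (C0 A) = vcomp K' (C0 A) (L2 (idc K A) (idc K A))"
  and C0_vcomp_L0: "A \<in> ob K \<Longrightarrow> vcomp K' (C0 A) (L0 A) = id2 K' (idc K' (F0 A))"
  using bilax_functor unfolding bilax_functor_def by blast+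

lemma nu_distributive_over_monad_image:
  assumes b: "endo K A b" and \<mu>: "cell_in K \<mu> (comp K b b) b" and \<eta>: "cell_in K \<eta> (idc K A) b"
  shows "distributive_over_monad K' (F1 b) (mult_image b \<mu>) (unit_image A \<eta>) (\<nu> b b)"
proof -
  note A = K.endo_in_ob[OF b]
  note T = cell_simps A endo_def b[unfolded endo_def] \<mu>[unfolded cell_in_def] \<eta>[unfolded cell_in_def]
  have nat: "vcomp K' (\<nu> b b) (hcomp K' (F2 \<mu>) (id2 K' (F1 b)))
      = vcomp K' (hcomp K' (id2 K' (F1 b)) (F2 \<mu>)) (\<nu> (comp K b b) b)"
    "vcomp K' (\<nu> b b) (hcomp K' (F2 \<eta>) (id2 K' (F1 b)))
      = vcomp K' (hcomp K' (id2 K' (F1 b)) (F2 \<eta>)) (\<nu> (idc K A) b)"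
    "vcomp K' (\<nu> b b) (hcomp K' (id2 K' (F1 b)) (F2 \<mu>))
      = vcomp K' (hcomp K' (F2 \<mu>) (id2 K' (F1 b))) (\<nu> b (comp K b b))"
    "vcomp K' (\<nu> b b) (hcomp K' (id2 K' (F1 b)) (F2 \<eta>))
      = vcomp K' (hcomp K' (F2 \<eta>) (id2 K' (F1 b))) (\<nu> b (idc K A))"
    using nu_natural[OF A, of "id2 K b" \<mu>] nu_natural[OF A, of "id2 K b" \<eta>]
      nu_natural[OF A, of \<mu> "id2 K b"] nu_natural[OF A, of \<eta> "id2 K b"]
    by (simp_all add: T)
  have lax: "vcomp K' (\<nu> (comp K b b) b) (hcomp K' (L2 b b) (id2 K' (F1 b)))
      = vcomp K' (hcomp K' (id2 K' (F1 b)) (L2 b b))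
          (vcomp K' (hcomp K' (\<nu> b b) (id2 K' (F1 b))) (hcomp K' (id2 K' (F1 b)) (\<nu> b b)))"
    "vcomp K' (\<nu> (idc K A) b) (hcomp K' (L0 A) (id2 K' (F1 b))) = hcomp K' (id2 K' (F1 b)) (L0 A)"
    "vcomp K' (\<nu> b (comp K b b)) (hcomp K' (id2 K' (F1 b)) (L2 b b))
      = vcomp K' (hcomp K' (L2 b b) (id2 K' (F1 b)))
          (vcomp K' (hcomp K' (id2 K' (F1 b)) (\<nu> b b)) (hcomp K' (\<nu> b b) (id2 K' (F1 b))))"
    "vcomp K' (\<nu> b (idc K A)) (hcomp K' (id2 K' (F1 b)) (L0 A)) = hcomp K' (L0 A) (id2 K' (F1 b))"
    using nu_L2_left[OF A b b b] nu_L0_left[OF A b] nu_L2_right[OF A b b b] nu_L0_right[OF A b]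
    by (simp_all add: T)
  show ?thesis
    unfolding distributive_over_monad_def
    by (simp add: T K'.normalize K'.vcomp_rewrite[OF nat(1)] K'.vcomp_rewrite[OF nat(2)]
        K'.vcomp_rewrite[OF nat(3)] K'.vcomp_rewrite[OF nat(4)] lax)
qed

lemma nu_distributive_over_comonad_image:
  assumes b: "endo K A b" and \<Delta>: "cell_in K \<Delta> b (comp K b b)" and \<epsilon>: "cell_in K \<epsilon> b (idc K A)"
  shows "distributive_over_comonad K' (F1 b) (comult_image b \<Delta>) (counit_image A \<epsilon>) (\<nu> b b)"
proof -
  note A = K.endo_in_ob[OF b]
  note T = cell_simps A endo_def b[unfolded endo_def] \<Delta>[unfolded cell_in_def] \<epsilon>[unfolded cell_in_def]
  have nat: "vcomp K' (hcomp K' (F2 \<Delta>) (id2 K' (F1 b))) (\<nu> b b)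
      = vcomp K' (\<nu> b (comp K b b)) (hcomp K' (id2 K' (F1 b)) (F2 \<Delta>))"
    "vcomp K' (hcomp K' (F2 \<epsilon>) (id2 K' (F1 b))) (\<nu> b b)
      = vcomp K' (\<nu> b (idc K A)) (hcomp K' (id2 K' (F1 b)) (F2 \<epsilon>))"
    "vcomp K' (hcomp K' (id2 K' (F1 b)) (F2 \<Delta>)) (\<nu> b b)
      = vcomp K' (\<nu> (comp K b b) b) (hcomp K' (F2 \<Delta>) (id2 K' (F1 b)))"
    "vcomp K' (hcomp K' (id2 K' (F1 b)) (F2 \<epsilon>)) (\<nu> b b)
      = vcomp K' (\<nu> (idc K A) b) (hcomp K' (F2 \<epsilon>) (id2 K' (F1 b)))"
    using nu_natural[OF A, of \<Delta> "id2 K b"] nu_natural[OF A, of \<epsilon> "id2 K b"]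
      nu_natural[OF A, of "id2 K b" \<Delta>] nu_natural[OF A, of "id2 K b" \<epsilon>]
    by (simp_all add: T)
  have colax: "vcomp K' (hcomp K' (C2 b b) (id2 K' (F1 b))) (\<nu> b (comp K b b))
      = vcomp K' (hcomp K' (id2 K' (F1 b)) (\<nu> b b))
          (vcomp K' (hcomp K' (\<nu> b b) (id2 K' (F1 b))) (hcomp K' (id2 K' (F1 b)) (C2 b b)))"
    "vcomp K' (hcomp K' (C0 A) (id2 K' (F1 b))) (\<nu> b (idc K A)) = hcomp K' (id2 K' (F1 b)) (C0 A)"
    "vcomp K' (hcomp K' (id2 K' (F1 b)) (C2 b b)) (\<nu> (comp K b b) b)
      = vcomp K' (hcomp K' (\<nu> b b) (id2 K' (F1 b)))
          (vcomp K' (hcomp K' (id2 K' (F1 b)) (\<nu> b b)) (hcomp K' (C2 b b) (id2 K' (F1 b))))"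
    "vcomp K' (hcomp K' (id2 K' (F1 b)) (C0 A)) (\<nu> (idc K A) b) = hcomp K' (C0 A) (id2 K' (F1 b))"
    using C2_nu_right[OF A b b b] C0_nu_right[OF A b] C2_nu_left[OF A b b b] C0_nu_left[OF A b]
    by (simp_all add: T)
  show ?thesis
    unfolding distributive_over_comonad_def
    by (simp add: T K'.normalize nat K'.vcomp_rewrite[OF colax(1)] K'.vcomp_rewrite[OF colax(2)]
        K'.vcomp_rewrite[OF colax(3)] K'.vcomp_rewrite[OF colax(4)])
qed

lemma mult_comult_image_compatible:
  assumes b: "endo K A b" and \<mu>: "cell_in K \<mu> (comp K b b) b" and \<Delta>: "cell_in K \<Delta> b (comp K b b)"
    and compatible: "vcomp K (hcomp K \<mu> \<mu>)
        (vcomp K (hcomp K (id2 K b) (hcomp K (c b b) (id2 K b))) (hcomp K \<Delta> \<Delta>)) = vcomp K \<Delta> \<mu>"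
  shows "vcomp K' (hcomp K' (mult_image b \<mu>) (mult_image b \<mu>))
      (vcomp K' (hcomp K' (id2 K' (F1 b)) (hcomp K' (\<nu> b b) (id2 K' (F1 b))))
        (hcomp K' (comult_image b \<Delta>) (comult_image b \<Delta>)))
    = vcomp K' (comult_image b \<Delta>) (mult_image b \<mu>)"
proof -
  note A = K.endo_in_ob[OF b]
  let ?bb = "comp K b b" and ?c = "hcomp K (id2 K b) (hcomp K (c b b) (id2 K b))"
  note T = cell_simps A endo_def b[unfolded endo_def] \<mu>[unfolded cell_in_def] \<Delta>[unfolded cell_in_def]
    c_cell_in[OF A b b, unfolded cell_in_def]
  have bilax: "vcomp K' (hcomp K' (L2 b b) (L2 b b))
      (vcomp K' (hcomp K' (id2 K' (F1 b)) (hcomp K' (\<nu> b b) (id2 K' (F1 b))))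
        (hcomp K' (C2 b b) (C2 b b)))
    = vcomp K' (C2 ?bb ?bb) (vcomp K' (F2 ?c) (L2 ?bb ?bb))"
    using bilax_compatible[of b b b b] by (simp add: T)
  have lax: "vcomp K' (L2 ?bb ?bb) (hcomp K' (F2 \<Delta>) (F2 \<Delta>)) = vcomp K' (F2 (hcomp K \<Delta> \<Delta>)) (L2 b b)"
    using L2_natural[of \<Delta> \<Delta>] by (simp add: T)
  have colax: "vcomp K' (hcomp K' (F2 \<mu>) (F2 \<mu>)) (C2 ?bb ?bb) = vcomp K' (C2 b b) (F2 (hcomp K \<mu> \<mu>))"
    using C2_natural[of \<mu> \<mu>] by (simp add: T)
  have F2_compatible: "vcomp K' (F2 (hcomp K \<mu> \<mu>)) (vcomp K' (F2 ?c) (F2 (hcomp K \<Delta> \<Delta>)))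
      = vcomp K' (F2 \<Delta>) (F2 \<mu>)"
    using arg_cong[where f = F2, OF compatible] by (simp add: T F2_vcomp)
  have "vcomp K' (hcomp K' (mult_image b \<mu>) (mult_image b \<mu>))
      (vcomp K' (hcomp K' (id2 K' (F1 b)) (hcomp K' (\<nu> b b) (id2 K' (F1 b))))
        (hcomp K' (comult_image b \<Delta>) (comult_image b \<Delta>)))
    = vcomp K' (hcomp K' (F2 \<mu>) (F2 \<mu>))
        (vcomp K' (C2 ?bb ?bb) (vcomp K' (F2 ?c) (vcomp K' (L2 ?bb ?bb) (hcomp K' (F2 \<Delta>) (F2 \<Delta>)))))"
    by (simp add: T K'.normalize K'.interchange K'.vcomp_rewrite3[OF bilax])
  also have "\<dots> = vcomp K' (C2 b b)
      (vcomp K' (F2 (hcomp K \<mu> \<mu>)) (vcomp K' (F2 ?c) (vcomp K' (F2 (hcomp K \<Delta> \<Delta>)) (L2 b b))))"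
    by (simp add: T K'.normalize lax K'.vcomp_rewrite[OF colax])
  also have "\<dots> = vcomp K' (comult_image b \<Delta>) (mult_image b \<mu>)"
    by (simp add: T K'.normalize K'.vcomp_rewrite3[OF F2_compatible])
  finally show ?thesis .
qed

lemma counit_mult_image_compatible:
  assumes b: "endo K A b" and \<mu>: "cell_in K \<mu> (comp K b b) b" and \<epsilon>: "cell_in K \<epsilon> b (idc K A)"
    and compatible: "hcomp K \<epsilon> \<epsilon> = vcomp K \<epsilon> \<mu>"
  shows "hcomp K' (counit_image A \<epsilon>) (counit_image A \<epsilon>) = vcomp K' (counit_image A \<epsilon>) (mult_image b \<mu>)"
proof -
  note A = K.endo_in_ob[OF b]
  note T = cell_simps A endo_def b[unfolded endo_def] \<mu>[unfolded cell_in_def] \<epsilon>[unfolded cell_in_def]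
  have lax: "vcomp K' (L2 (idc K A) (idc K A)) (hcomp K' (F2 \<epsilon>) (F2 \<epsilon>))
      = vcomp K' (F2 (hcomp K \<epsilon> \<epsilon>)) (L2 b b)"
    using L2_natural[of \<epsilon> \<epsilon>] by (simp add: T)
  have F2_compatible: "F2 (hcomp K \<epsilon> \<epsilon>) = vcomp K' (F2 \<epsilon>) (F2 \<mu>)"
    using arg_cong[where f = F2, OF compatible] by (simp add: T F2_vcomp)
  show ?thesis
    by (simp add: T K'.normalize K'.interchange C0_hcomp_C0 lax F2_compatible)
qed

lemma unit_comult_image_compatible:
  assumes b: "endo K A b" and \<eta>: "cell_in K \<eta> (idc K A) b" and \<Delta>: "cell_in K \<Delta> b (comp K b b)"
    and compatible: "hcomp K \<eta> \<eta> = vcomp K \<Delta> \<eta>"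
  shows "hcomp K' (unit_image A \<eta>) (unit_image A \<eta>) = vcomp K' (comult_image b \<Delta>) (unit_image A \<eta>)"
proof -
  note A = K.endo_in_ob[OF b]
  note T = cell_simps A endo_def b[unfolded endo_def] \<eta>[unfolded cell_in_def] \<Delta>[unfolded cell_in_def]
  have colax: "vcomp K' (hcomp K' (F2 \<eta>) (F2 \<eta>)) (C2 (idc K A) (idc K A))
      = vcomp K' (C2 b b) (F2 (hcomp K \<eta> \<eta>))"
    using C2_natural[of \<eta> \<eta>] by (simp add: T)
  have F2_compatible: "F2 (hcomp K \<eta> \<eta>) = vcomp K' (F2 \<Delta>) (F2 \<eta>)"
    using arg_cong[where f = F2, OF compatible] by (simp add: T F2_vcomp)
  show ?thesis
    by (simp add: T K'.normalize K'.interchange L0_hcomp_L0 K'.vcomp_rewrite[OF colax] F2_compatible)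
qed

lemma counit_unit_image:
  assumes A: "A \<in> ob K" and \<eta>: "cell_in K \<eta> (idc K A) b" and \<epsilon>: "cell_in K \<epsilon> b (idc K A)"
    and counit_unit: "vcomp K \<epsilon> \<eta> = id2 K (idc K A)"
  shows "vcomp K' (counit_image A \<epsilon>) (unit_image A \<eta>) = id2 K' (idc K' (F0 A))"
proof -
  note T = cell_simps A \<eta>[unfolded cell_in_def] \<epsilon>[unfolded cell_in_def]
  have "vcomp K' (F2 \<epsilon>) (F2 \<eta>) = id2 K' (F1 (idc K A))"
    using arg_cong[where f = F2, OF counit_unit] by (simp add: T F2_vcomp)
  then show ?thesis
    by (simp add: T K'.normalize K'.vcomp_rewrite C0_vcomp_L0)
qed

lemma bimonad_compatible_image:
  assumes b: "endo K A b" and \<mu>: "cell_in K \<mu> (comp K b b) b" and \<eta>: "cell_in K \<eta> (idc K A) b"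
    and \<Delta>: "cell_in K \<Delta> b (comp K b b)" and \<epsilon>: "cell_in K \<epsilon> b (idc K A)"
    and compatible: "bimonad_compatible K A b \<mu> \<eta> \<Delta> \<epsilon> (c b b)"
  shows "bimonad_compatible K' (F0 A) (F1 b) (mult_image b \<mu>) (unit_image A \<eta>)
    (comult_image b \<Delta>) (counit_image A \<epsilon>) (\<nu> b b)"
  using compatible K.endo_in_ob[OF b]
    mult_comult_image_compatible[OF b \<mu> \<Delta>] counit_mult_image_compatible[OF b \<mu> \<epsilon>]
    unit_comult_image_compatible[OF b \<eta> \<Delta>] counit_unit_image[OF _ \<eta> \<epsilon>]
  unfolding bimonad_compatible_def by blast

end

theorem proposition4p9:
  fixes K :: "('o, 'a, 'c) twocat" and K' :: "('p, 'b, 'd) twocat"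
    and c :: "'a \<Rightarrow> 'a \<Rightarrow> 'c"
    and F0 :: "'o \<Rightarrow> 'p" and F1 :: "'a \<Rightarrow> 'b" and F2 :: "'c \<Rightarrow> 'd"
    and L2 :: "'a \<Rightarrow> 'a \<Rightarrow> 'd" and L0 :: "'o \<Rightarrow> 'd"
    and C2 :: "'a \<Rightarrow> 'a \<Rightarrow> 'd" and C0 :: "'o \<Rightarrow> 'd"
    and \<nu> :: "'a \<Rightarrow> 'a \<Rightarrow> 'd"
    and A :: 'o and b :: 'a and \<mu> \<eta> \<Delta> \<epsilon> :: 'c
  assumes "strict_2cat K" and "strict_2cat K'"
    and "yb_operator K c"
    and "bilax_functor K c K' F0 F1 F2 L2 L0 C2 C0 \<nu>"
    and "A \<in> ob K"
    and "c_bimonad K c A b \<mu> \<eta> \<Delta> \<epsilon>"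
  shows "tau_bimonad K' (F0 A) (F1 b)
           (vcomp K' (F2 \<mu>) (L2 b b)) (vcomp K' (F2 \<eta>) (L0 A))
           (vcomp K' (C2 b b) (F2 \<Delta>)) (vcomp K' (C0 A) (F2 \<epsilon>))
           (\<nu> b b)"
proof -
  interpret bilax K K' F0 F1 F2 L2 L0 C2 C0 c \<nu>
    by unfold_locales (fact assms | use assms(4) in \<open>simp add: bilax_functor_def\<close>)+
  have bimonad: "tau_bimonad K A b \<mu> \<eta> \<Delta> \<epsilon> (c b b)"
    using assms(6) unfolding c_bimonad_def .
  then have monad: "monad2 K A b \<mu> \<eta>" and comonad: "comonad2 K A b \<Delta> \<epsilon>"
    and compatible: "bimonad_compatible K A b \<mu> \<eta> \<Delta> \<epsilon> (c b b)"
    by (simp_all add: tau_bimonad_iff)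
  have b: "endo K A b" and \<mu>: "cell_in K \<mu> (comp K b b) b" and \<eta>: "cell_in K \<eta> (idc K A) b"
    using monad unfolding monad2_def by simp_all
  have \<Delta>: "cell_in K \<Delta> b (comp K b b)" and \<epsilon>: "cell_in K \<epsilon> b (idc K A)"
    using comonad unfolding comonad2_def by simp_all
  show ?thesis
    unfolding tau_bimonad_iff
    using monad_image[OF monad] comonad_image[OF comonad] nu_cell_in[OF assms(5) b b]
      nu_distributive_over_monad_image[OF b \<mu> \<eta>] nu_distributive_over_comonad_image[OF b \<Delta> \<epsilon>]
      bimonad_compatible_image[OF b \<mu> \<eta> \<Delta> \<epsilon> compatible]
    by blast
qed

end
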